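(* Let $(\Lambda,d)$ be a $k$-graph and let $(\overline{\Lambda},\overline d)$ be its extension as described in the context. If $\Lambda$ is finitely aligned, then $\overline{\Lambda}$ is finitely aligned. If $\Lambda$ is row-finite, then $\overline{\Lambda}$ is row-finite.
   Context: A $k$-graph $(\Lambda,d)$ is a countable category with a degree functor $d:\Lambda\to\mathbb{N}^k$ satisfying unique factorization; $\Lambda^0$ vertices, $r,s$ range/source, $v\Lambda^n=\{\lambda:r(\lambda)=v,d(\lambda)=n\}$; $e_i$ standard basis, $\le$ coordinatewise, $\vee,\wedge$ coordinatewise max/min. A $k$-graph $\Gamma$ is row-finite if $v\Gamma^n$ is finite for all vertices $v$ and $n\in\mathbb{N}^k$; it is finitely aligned if $\Gamma^{\min}(\lambda,\mu)=\{(\alpha,\beta):\lambda\alpha=\mu\beta,\ d(\lambda\alpha)=d(\lambda)\vee d(\mu)\}$ is finite for all $\lambda,\mu\in\Gamma$. For $m\in(\mathbb{N}\cup\{\infty\})^k$, $\Omega_{k,m}$ has objects $\{p\in\mathbb{N}^k:p\le m\}$, morphisms $(p,q)$, $p\le q\le m$, $r(p,q)=p$, $s(p,q)=q$, $d(p,q)=q-p$. A graph morphism $x:\Omega_{k,m}\to\Lambda$ is a degree-preserving functor; $d(x)=m$, $x(a,b)=x((a,b))$, $x(a)=x(a,a)$. It is a boundary path if there is $n_x\in\mathbb{N}^k$, $n_x\le d(x)$, with $x(p)\Lambda^{e_i}=\emptyset$ whenever $p\in\mathbb{N}^k$, $n_x\le p\le d(x)$, $p_i=d(x)_i$; $\Lambda^{\le\infty}$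 is the set of boundary paths. $\sigma^px(a,b)=x(a+p,b+p)$; $\lambda x$ is the concatenation of $\lambda$ and $x$. $V_\Lambda=\{(x;m):x\in\Lambda^{\le\infty},m\in\mathbb{N}^k,m\not\le d(x)\}$, $(x;m)\approx(y;p)$ iff $x(m\wedge d(x))=y(p\wedge d(y))$ and $m-m\wedge d(x)=p-p\wedge d(y)$; classes $[x;m]$ form $\widetilde{V_\Lambda}$. $P_\Lambda=\{(x;(m,n)):x\in\Lambda^{\le\infty},m\le n\in\mathbb{N}^k,n\not\le d(x)\}$, $(x;(m,n))\sim(y;(p,q))$ iff $x(m\wedge d(x),n\wedge d(x))=y(p\wedge d(y),q\wedge d(y))$, $m-m\wedge d(x)=p-p\wedge d(y)$, $n-m=q-p$; classes $[x;(m,n)]$ form $\widetilde{P_\Lambda}$. The extension $\overline{\Lambda}$ is the $k$-graph with objects $\Lambda^0\sqcup\widetilde{V_\Lambda}$ and morphisms $\Lambda\sqcup\widetilde{P_\Lambda}$: on $\Lambda$ everything is as in $\Lambda$; $\overline r([x;(m,n)])=x(m)$ if $m\le d(x)$, else $[x;m]$; $\overline s([x;(m,n)])=[x;n]$; identity at $[x;m]$ is $[x;(m,m)]$; $\lambda[x;(m,n)]=[\lambda\sigma^mx;(0,d(\lambda)+n-m)]$; $[x;(m,n)][y;(p,q)]=[z;(m,n+q-p)]$ with $z=x(0,n\wedge d(x))\sigma^{p\wedge d(y)}y$; degree $\overline d|_\Lambda=d$, $\overline d([x;(m,n)])=n-m$. *)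

theory Defs
  imports "HOL-Analysis.Finite_Cartesian_Product" "HOL-Library.Extended_Nat"
    "HOL-Library.Countable_Set"
begin

text \<open>A k-graph is encoded as a small category given by its sets of objects and
morphisms, range, source, composition (cp f g = "f g", defined when sc f = rg g),
identities and a degree map into nat^'k, where CARD('k) = k.\<close>

record ('v, 'a, 'k) kg =
  obj :: "'v set"
  mor :: "'a set"
  rg :: "'a \<Rightarrow> 'v"
  sc :: "'a \<Rightarrow> 'v"
  cp :: "'a \<Rightarrow> 'a \<Rightarrow> 'a"
  ident :: "'v \<Rightarrow> 'a"
  deg :: "'a \<Rightarrow> nat ^ 'k::finite"

definition vmax :: "nat ^ 'k::finite \<Rightarrow> nat ^ 'k \<Rightarrow> nat ^ 'k" where
  "vmax a b = (\<chi> i. max (a $ i) (b $ i))"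

definition unitv :: "'k::finite \<Rightarrow> nat ^ 'k" where
  "unitv i = (\<chi> j. if j = i then 1 else 0)"

definition kgraph :: "('v, 'a, 'k::finite) kg \<Rightarrow> bool" where
  "kgraph G \<longleftrightarrow>
     countable (obj G) \<and> countable (mor G) \<and>
     (\<forall>f\<in>mor G. rg G f \<in> obj G \<and> sc G f \<in> obj G) \<and>
     (\<forall>v\<in>obj G. ident G v \<in> mor G \<and> rg G (ident G v) = v \<and> sc G (ident G v) = v
                 \<and> deg G (ident G v) = 0) \<and>
     (\<forall>f\<in>mor G. \<forall>g\<in>mor G. sc G f = rg G g \<longrightarrow>
        cp G f g \<in> mor G \<and> rg G (cp G f g) = rg G f \<and> sc G (cp G f g) = sc G g
        \<and> deg G (cp G f g) = deg G f + deg G g) \<and>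
     (\<forall>f\<in>mor G. cp G (ident G (rg G f)) f = f \<and> cp G f (ident G (sc G f)) = f) \<and>
     (\<forall>f\<in>mor G. \<forall>g\<in>mor G. \<forall>h\<in>mor G. sc G f = rg G g \<longrightarrow> sc G g = rg G h \<longrightarrow>
        cp G (cp G f g) h = cp G f (cp G g h)) \<and>
     (\<forall>f\<in>mor G. \<forall>m n. deg G f = m + n \<longrightarrow>
        (\<exists>!(g, h). g \<in> mor G \<and> h \<in> mor G \<and> sc G g = rg G h \<and> cp G g h = f
                  \<and> deg G g = m \<and> deg G h = n))"

definition row_finite :: "('v, 'a, 'k::finite) kg \<Rightarrow> bool" where
  "row_finite G \<longleftrightarrow>
     (\<forall>v\<in>obj G. \<forall>n. finite {f \<in> mor G. rg G f = v \<and> deg G f = n})"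

definition min_ext :: "('v, 'a, 'k::finite) kg \<Rightarrow> 'a \<Rightarrow> 'a \<Rightarrow> ('a \<times> 'a) set" where
  "min_ext G l m = {(a, b). a \<in> mor G \<and> b \<in> mor G \<and> sc G l = rg G a \<and> sc G m = rg G b
       \<and> cp G l a = cp G m b \<and> deg G (cp G l a) = vmax (deg G l) (deg G m)}"

definition finitely_aligned :: "('v, 'a, 'k::finite) kg \<Rightarrow> bool" where
  "finitely_aligned G \<longleftrightarrow> (\<forall>l\<in>mor G. \<forall>m\<in>mor G. finite (min_ext G l m))"

text \<open>A path x is a pair (d(x), f) with d(x) in (N \<union> {\<infinity>})^k and f p q = x(p,q)
(only meaningful for p \<le> q \<le> d(x)).\<close>

type_synonym ('a, 'k) path = "(enat ^ 'k) \<times> (nat ^ 'k \<Rightarrow> nat ^ 'k \<Rightarrow> 'a)"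

definition leE :: "nat ^ 'k::finite \<Rightarrow> enat ^ 'k \<Rightarrow> bool" where
  "leE p m \<longleftrightarrow> (\<forall>i. enat (p $ i) \<le> m $ i)"

definition vmin_e :: "nat ^ 'k::finite \<Rightarrow> enat ^ 'k \<Rightarrow> nat ^ 'k" where
  "vmin_e p m = (\<chi> i. the_enat (min (enat (p $ i)) (m $ i)))"

text \<open>Degree-preserving functor \<Omega>_{k,m} \<rightarrow> \<Lambda>; the object p is sent to rg (x p p).\<close>
definition graph_morph :: "('v, 'a, 'k::finite) kg \<Rightarrow> ('a, 'k) path \<Rightarrow> bool" where
  "graph_morph G x \<longleftrightarrow>
     (\<forall>p q. p \<le> q \<and> leE q (fst x) \<longrightarrow>
        snd x p q \<in> mor G \<and> deg G (snd x p q) = q - p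
        \<and> rg G (snd x p q) = rg G (snd x p p) \<and> sc G (snd x p q) = rg G (snd x q q)) \<and>
     (\<forall>p. leE p (fst x) \<longrightarrow> snd x p p = ident G (rg G (snd x p p))) \<and>
     (\<forall>p q r. p \<le> q \<and> q \<le> r \<and> leE r (fst x) \<longrightarrow> cp G (snd x p q) (snd x q r) = snd x p r)"

definition vtx :: "('v, 'a, 'k::finite) kg \<Rightarrow> ('a, 'k) path \<Rightarrow> nat ^ 'k \<Rightarrow> 'v" where
  "vtx G x p = rg G (snd x p p)"

definition boundary_paths :: "('v, 'a, 'k::finite) kg \<Rightarrow> ('a, 'k) path set" where
  "boundary_paths G = {x. graph_morph G x \<and>
     (\<exists>nx. leE nx (fst x) \<and>
        (\<forall>p. nx \<le> p \<and> leE p (fst x) \<longrightarrow>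
           (\<forall>i. enat (p $ i) = fst x $ i \<longrightarrow>
              {f \<in> mor G. rg G f = vtx G x p \<and> deg G f = unitv i} = {})))}"

definition shift :: "nat ^ 'k::finite \<Rightarrow> ('a, 'k) path \<Rightarrow> ('a, 'k) path" where
  "shift p x = ((\<chi> i. fst x $ i - enat (p $ i)), (\<lambda>a b. snd x (a + p) (b + p)))"

text \<open>The factor f(p,q) of a morphism f, for p \<le> q \<le> d(f).\<close>
definition seg :: "('v, 'a, 'k::finite) kg \<Rightarrow> 'a \<Rightarrow> nat ^ 'k \<Rightarrow> nat ^ 'k \<Rightarrow> 'a" where
  "seg G f p q = (THE b. \<exists>a c. a \<in> mor G \<and> b \<in> mor G \<and> c \<in> mor G
      \<and> sc G a = rg G b \<and> sc G b = rg G c \<and> f = cp G (cp G a b) c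
      \<and> deg G a = p \<and> deg G b = q - p \<and> deg G c = deg G f - q)"

text \<open>Concatenation \<lambda>y of a morphism with a path y with r(y) = s(\<lambda>).\<close>
definition concat :: "('v, 'a, 'k::finite) kg \<Rightarrow> 'a \<Rightarrow> ('a, 'k) path \<Rightarrow> ('a, 'k) path" where
  "concat G l y = ((\<chi> i. enat (deg G l $ i) + fst y $ i),
     (\<lambda>a b. seg G (cp G l (snd y 0 (vmax b (deg G l) - deg G l))) a b))"

definition Vset :: "('v, 'a, 'k::finite) kg \<Rightarrow> (('a, 'k) path \<times> (nat ^ 'k)) set" where
  "Vset G = {(x, m). x \<in> boundary_paths G \<and> \<not> leE m (fst x)}"

definition Vrel :: "('v, 'a, 'k::finite) kg \<Rightarrow> ((('a, 'k) path \<times> (nat ^ 'k)) \<times> (('a, 'k) path \<times> (nat ^ 'k))) set" where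
  "Vrel G = {((x, m), (y, p)). (x, m) \<in> Vset G \<and> (y, p) \<in> Vset G
      \<and> vtx G x (vmin_e m (fst x)) = vtx G y (vmin_e p (fst y))
      \<and> m - vmin_e m (fst x) = p - vmin_e p (fst y)}"

definition Pset :: "('v, 'a, 'k::finite) kg \<Rightarrow> (('a, 'k) path \<times> (nat ^ 'k) \<times> (nat ^ 'k)) set" where
  "Pset G = {(x, m, n). x \<in> boundary_paths G \<and> m \<le> n \<and> \<not> leE n (fst x)}"

definition Prel :: "('v, 'a, 'k::finite) kg \<Rightarrow> ((('a, 'k) path \<times> (nat ^ 'k) \<times> (nat ^ 'k)) \<times> (('a, 'k) path \<times> (nat ^ 'k) \<times> (nat ^ 'k))) set" where
  "Prel G = {((x, m, n), (y, p, q)). (x, m, n) \<in> Pset G \<and> (y, p, q) \<in> Pset G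
      \<and> snd x (vmin_e m (fst x)) (vmin_e n (fst x)) = snd y (vmin_e p (fst y)) (vmin_e q (fst y))
      \<and> m - vmin_e m (fst x) = p - vmin_e p (fst y)
      \<and> n - m = q - p}"

definition Vcls :: "('v, 'a, 'k::finite) kg \<Rightarrow> ('a, 'k) path \<Rightarrow> nat ^ 'k \<Rightarrow> (('a, 'k) path \<times> (nat ^ 'k)) set" where
  "Vcls G x m = Vrel G `` {(x, m)}"

definition Pcls :: "('v, 'a, 'k::finite) kg \<Rightarrow> ('a, 'k) path \<Rightarrow> nat ^ 'k \<Rightarrow> nat ^ 'k \<Rightarrow> (('a, 'k) path \<times> (nat ^ 'k) \<times> (nat ^ 'k)) set" where
  "Pcls G x m n = Prel G `` {(x, m, n)}"

text \<open>Representative of a class (the operations are well defined, so the choice is irrelevant).\<close>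
definition rep :: "'b set \<Rightarrow> 'b" where
  "rep C = (SOME a. a \<in> C)"

type_synonym ('v, 'a, 'k) ext_kg =
  "('v + (('a, 'k) path \<times> (nat ^ 'k)) set,
    'a + (('a, 'k) path \<times> (nat ^ 'k) \<times> (nat ^ 'k)) set, 'k) kg"

definition ext :: "('v, 'a, 'k::finite) kg \<Rightarrow> ('v, 'a, 'k) ext_kg" where
  "ext G = \<lparr>
     obj = Inl ` obj G \<union> Inr ` (Vset G // Vrel G),
     mor = Inl ` mor G \<union> Inr ` (Pset G // Prel G),
     rg = (\<lambda>f. case f of Inl l \<Rightarrow> Inl (rg G l)
              | Inr C \<Rightarrow> (case rep C of (x, m, n) \<Rightarrow>
                   if leE m (fst x) then Inl (vtx G x m) else Inr (Vcls G x m))),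
     sc = (\<lambda>f. case f of Inl l \<Rightarrow> Inl (sc G l)
              | Inr C \<Rightarrow> (case rep C of (x, m, n) \<Rightarrow> Inr (Vcls G x n))),
     cp = (\<lambda>f g. case (f, g) of
              (Inl l, Inl l') \<Rightarrow> Inl (cp G l l')
            | (Inl l, Inr C) \<Rightarrow> (case rep C of (x, m, n) \<Rightarrow>
                 Inr (Pcls G (concat G l (shift m x)) 0 (deg G l + n - m)))
            | (Inr C, Inr D) \<Rightarrow> (case rep C of (x, m, n) \<Rightarrow> case rep D of (y, p, q) \<Rightarrow>
                 Inr (Pcls G (concat G (snd x 0 (vmin_e n (fst x))) (shift (vmin_e p (fst y)) y))
                        m (n + q - p)))
            | (Inr C, Inl l) \<Rightarrow> undefined),
     ident = (\<lambda>v. case v of Inl u \<Rightarrow> Inl (ident G u)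
              | Inr V \<Rightarrow> (case rep V of (x, m) \<Rightarrow> Inr (Pcls G x m m))),
     deg = (\<lambda>f. case f of Inl l \<Rightarrow> deg G l
              | Inr C \<Rightarrow> (case rep C of (x, m, n) \<Rightarrow> n - m)) \<rparr>"

end

(*
  A morphism f of the extension is determined by its key: the morphism ext_base f of \<Lambda> it is
  built on (x(m \<and> d(x), n \<and> d(x)) for f = [x;(m,n)]), the amount ext_rg_offset f by which its
  range lies beyond that path, and its degree.  Keys compose like morphisms: the key of f g has
  base (ext_base f)(ext_base g), the range offset of f and degree d(f) + d(g).

  Hence the pairs (a, b) in \<Lambda>bar^min(l, m) inject into pairs of keys with prescribed offsets and
  degrees whose bases form a pair in \<Lambda>^min(ext_base l, ext_base m).  The bases do meet in the
  join of their degrees because, in every coordinate, either the base of l has the full degree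
  of l or the range of a lies beyond the path, and then the base of a has degree 0 there.
  Likewise the morphisms with a fixed range and degree N inject into keys (\<alpha>, o, N) with \<alpha>
  in u\<Lambda>^{\<le>N}, where u and o are determined by the range.  Finite alignment, resp.
  row-finiteness, of \<Lambda> then makes these sets finite.
*)

theory Submission
  imports Defs
begin

instance vec :: (ordered_cancel_comm_monoid_diff, finite) ordered_cancel_comm_monoid_diff
proof
  fix a b c :: "'a ^ 'b"
  show "a \<le> b \<longleftrightarrow> (\<exists>c. b = a + c)"
  proof
    assume "a \<le> b"
    then have "b = a + (b - a)"
      unfolding vec_eq_iff less_eq_vec_def
      by (simp add: ordered_cancel_comm_monoid_diff_class.add_diff_inverse)
    then show "\<exists>c. b = a + c" ..
  next
    assume "\<exists>c. b = a + c"
    then show "a \<le> b" unfolding less_eq_vec_def by (auto intro: le_iff_add[THEN iffD2])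
  qed
  show "0 - a = 0" by (simp add: vec_eq_iff)
  show "a \<le> b \<Longrightarrow> c + a \<le> c + b" unfolding less_eq_vec_def by (auto intro: add_left_mono)
  show "c + a \<le> c + b \<Longrightarrow> a \<le> b" unfolding less_eq_vec_def by (auto intro: add_le_imp_le_left)
qed

instance vec :: (ordered_cancel_comm_monoid_diff, finite) ordered_ab_semigroup_monoid_add_imp_le ..

lemma vmax_nth [simp]: "vmax a b $ i = max (a $ i) (b $ i)"
  by (simp add: vmax_def)

lemma less_eq_vec_nth: "x \<le> y \<Longrightarrow> x $ i \<le> y $ i"
  by (simp add: less_eq_vec_def)

lemma vmax_absorb1: "(b::nat ^ 'k::finite) \<le> a \<Longrightarrow> vmax a b = a"
  by (simp add: vec_eq_iff less_eq_vec_def max_absorb1)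

lemma vmax_diff_mono:
  assumes "(q::nat ^ 'k::finite) \<le> b"
  shows "vmax q d - d \<le> vmax b d - d"
  unfolding less_eq_vec_def
proof
  fix i
  have "q $ i \<le> b $ i"
    using assms by (simp add: less_eq_vec_def)
  then show "(vmax q d - d) $ i \<le> (vmax b d - d) $ i"
    by (simp add: diff_le_mono)
qed

lemma add_eq_max_nat:
  fixes dl da dm db Nl Na Nm :: nat
  assumes "dl \<noteq> Nl \<Longrightarrow> da = 0" "dm \<noteq> Nm \<Longrightarrow> db = 0" "da \<le> Na" "Nl + Na = max Nl Nm"
    "dl + da = dm + db"
  shows "dl + da = max dl dm"
  using assms by (cases "dl = Nl"; cases "dm = Nm") auto

lemma add_diff_eq_of_diff_eq:
  fixes n n' p p' q :: "nat ^ 'k::finite"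
  assumes "n - n' = p - p'" "n' \<le> n" "p' \<le> p" "p' \<le> q"
  shows "n = n' + (p - p')" "n + q - p = n' + (q - p')"
proof -
  have coord: "n $ i = n' $ i + (p $ i - p' $ i) \<and> n $ i + q $ i - p $ i = n' $ i + (q $ i - p' $ i)"
    for i
    using arg_cong[OF assms(1), of "\<lambda>v. v $ i"] less_eq_vec_nth[OF assms(2), of i]
      less_eq_vec_nth[OF assms(3), of i] less_eq_vec_nth[OF assms(4), of i]
    by simp linarith
  show "n = n' + (p - p')"
    using coord by (simp add: vec_eq_iff)
  show "n + q - p = n' + (q - p')"
    unfolding vec_eq_iff vector_add_component vector_minus_component using coord by blast
qed

lemma le_add_diff_vec:
  fixes m n p q :: "nat ^ 'k::finite"
  assumes "m \<le> n" "p \<le> q"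
  shows "m \<le> n + q - p"
  unfolding less_eq_vec_def
proof
  fix i
  show "m $ i \<le> (n + q - p) $ i"
    using less_eq_vec_nth[OF assms(1), of i] less_eq_vec_nth[OF assms(2), of i] by simp
qed

lemma add_diff_diff_vec:
  fixes m n p q :: "nat ^ 'k::finite"
  assumes "m \<le> n" "p \<le> q"
  shows "n + q - p - m = (n - m) + (q - p)"
  using assms unfolding vec_eq_iff less_eq_vec_def by (simp add: add.commute)

lemma finite_atMost_vec: "finite {..(N::nat ^ 'k::finite)}"
proof -
  have "{..N} \<subseteq> vec_lambda ` (\<Pi>\<^sub>E i\<in>UNIV. {..N $ i})"
  proof
    fix d assume "d \<in> {..N}"
    then have "vec_nth d \<in> (\<Pi>\<^sub>E i\<in>UNIV. {..N $ i})"
      by (auto simp: less_eq_vec_def)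
    then show "d \<in> vec_lambda ` (\<Pi>\<^sub>E i\<in>UNIV. {..N $ i})"
      by (metis image_eqI vec_nth_inverse)
  qed
  then show ?thesis
    by (rule finite_subset) (simp add: finite_PiE)
qed

lemma leE_nth: "leE p D \<Longrightarrow> enat (p $ i) \<le> D $ i"
  by (simp add: leE_def)

lemma vmin_e_nth: "vmin_e p D $ i = (case D $ i of enat d \<Rightarrow> min (p $ i) d | \<infinity> \<Rightarrow> p $ i)"
  by (cases "D $ i") (simp_all add: vmin_e_def)

lemma leE_vmin_e: "leE (vmin_e p D) D"
  unfolding leE_def by (auto simp: vmin_e_nth split: enat.split)

lemma vmin_e_le: "vmin_e p D \<le> p"
  unfolding less_eq_vec_def by (auto simp: vmin_e_nth split: enat.split)

lemma vmin_e_eq_iff: "vmin_e p D = p \<longleftrightarrow> leE p D"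
  unfolding leE_def vec_eq_iff
proof (intro iffI allI)
  fix i
  show "\<forall>i. vmin_e p D $ i = p $ i \<Longrightarrow> enat (p $ i) \<le> D $ i"
    by (cases "D $ i") (auto simp: vmin_e_nth dest: spec[of _ i])
  show "\<forall>i. enat (p $ i) \<le> D $ i \<Longrightarrow> vmin_e p D $ i = p $ i"
    by (cases "D $ i") (auto simp: vmin_e_nth dest: spec[of _ i])
qed

lemma vmin_e_mono: "m \<le> n \<Longrightarrow> vmin_e m D \<le> vmin_e n D"
  unfolding less_eq_vec_def
proof
  fix i assume "\<forall>i. m $ i \<le> n $ i"
  then show "vmin_e m D $ i \<le> vmin_e n D $ i"
    by (cases "D $ i") (auto simp: vmin_e_nth dest: spec[of _ i])
qed

lemma le_leE_trans: "q \<le> p \<Longrightarrow> leE p D \<Longrightarrow> leE q D"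
  unfolding leE_def less_eq_vec_def by (meson enat_ord_simps(1) order.trans)

lemma leE_0: "leE 0 D"
  by (simp add: leE_def zero_enat_def[symmetric])

lemma vmin_e_add: "vmin_e (a + b) (\<chi> i. enat (a $ i) + D $ i) = a + vmin_e b D"
  unfolding vec_eq_iff
proof
  fix i show "vmin_e (a + b) (\<chi> i. enat (a $ i) + D $ i) $ i = (a + vmin_e b D) $ i"
    by (cases "D $ i") (auto simp: vmin_e_nth)
qed

lemma leE_add: "leE (a + b) (\<chi> i. enat (a $ i) + D $ i) \<longleftrightarrow> leE b D"
proof -
  have "enat ((a + b) $ i) \<le> enat (a $ i) + D $ i \<longleftrightarrow> enat (b $ i) \<le> D $ i" for i
    by (cases "D $ i") auto
  then show ?thesis
    unfolding leE_def by simp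
qed

lemma vmin_e_diff:
  assumes "leE s D" "s \<le> b"
  shows "vmin_e (b - s) (\<chi> i. D $ i - enat (s $ i)) = vmin_e b D - s"
  unfolding vec_eq_iff
proof
  fix i
  have "enat (s $ i) \<le> D $ i" "s $ i \<le> b $ i"
    using assms by (simp_all add: leE_def less_eq_vec_def)
  then show "vmin_e (b - s) (\<chi> i. D $ i - enat (s $ i)) $ i = (vmin_e b D - s) $ i"
    by (cases "D $ i") (auto simp: vmin_e_nth)
qed

lemma leE_diff:
  assumes "leE s D" "s \<le> b"
  shows "leE (b - s) (\<chi> i. D $ i - enat (s $ i)) \<longleftrightarrow> leE b D"
proof -
  have "enat ((b - s) $ i) \<le> D $ i - enat (s $ i) \<longleftrightarrow> enat (b $ i) \<le> D $ i" for i
  proof -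
    have "enat (s $ i) \<le> D $ i" "s $ i \<le> b $ i"
      using assms by (simp_all add: leE_def less_eq_vec_def)
    then show ?thesis
      by (cases "D $ i") auto
  qed
  then show ?thesis
    unfolding leE_def by simp
qed

lemma vmin_e_eq_below:
  assumes "m \<le> n" "vmin_e n D = vmin_e n E"
  shows "vmin_e m D = vmin_e m E"
  unfolding vec_eq_iff
proof
  fix i
  have "m $ i \<le> n $ i" "vmin_e n D $ i = vmin_e n E $ i"
    using assms by (simp_all add: less_eq_vec_def)
  then show "vmin_e m D $ i = vmin_e m E $ i"
    by (cases "D $ i"; cases "E $ i") (auto simp: vmin_e_nth)
qed

lemma vmin_e_nth_truncated:
  assumes "vmin_e m D $ i \<noteq> m $ i" "m \<le> n"
  shows "vmin_e n D $ i = vmin_e m D $ i"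
  using assms less_eq_vec_nth[OF assms(2), of i]
  by (cases "D $ i") (auto simp: vmin_e_nth)

definition ker_rel :: "'b set \<Rightarrow> ('b \<Rightarrow> 'c) \<Rightarrow> ('b \<times> 'b) set" where
  "ker_rel A k = {(a, b). a \<in> A \<and> b \<in> A \<and> k a = k b}"

lemma rep_ker_rel_class:
  assumes "a \<in> A"
  shows "rep (ker_rel A k `` {a}) \<in> A \<and> k (rep (ker_rel A k `` {a})) = k a"
proof -
  define C where "C = ker_rel A k `` {a}"
  have "a \<in> C"
    using assms by (simp add: C_def ker_rel_def)
  then have "rep C \<in> C"
    unfolding rep_def by (rule someI)
  then have "(a, rep C) \<in> ker_rel A k"
    by (simp add: C_def)
  then show ?thesis
    unfolding C_def[symmetric] by (simp add: ker_rel_def)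
qed

lemma rep_in_quotient_ker_rel: "C \<in> A // ker_rel A k \<Longrightarrow> rep C \<in> A"
  by (auto elim!: quotientE simp: rep_ker_rel_class)

lemma quotient_ker_rel_eqI:
  assumes "C \<in> A // ker_rel A k" "C' \<in> A // ker_rel A k" "k (rep C) = k (rep C')"
  shows "C = C'"
  using assms by (auto elim!: quotientE simp: rep_ker_rel_class) (auto simp: ker_rel_def)

section \<open>Paths\<close>

lemma graph_morph_seg:
  "graph_morph G x \<Longrightarrow> p \<le> q \<Longrightarrow> leE q (fst x) \<Longrightarrow>
   snd x p q \<in> mor G \<and> deg G (snd x p q) = q - p \<and> rg G (snd x p q) = vtx G x p
     \<and> sc G (snd x p q) = vtx G x q"
  unfolding graph_morph_def vtx_def by blast

lemma graph_morph_ident: "graph_morph G x \<Longrightarrow> leE p (fst x) \<Longrightarrow> snd x p p = ident G (vtx G x p)"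
  unfolding graph_morph_def vtx_def by blast

lemma graph_morph_cp:
  "graph_morph G x \<Longrightarrow> p \<le> q \<Longrightarrow> q \<le> r \<Longrightarrow> leE r (fst x) \<Longrightarrow>
   cp G (snd x p q) (snd x q r) = snd x p r"
  unfolding graph_morph_def by blast

lemma boundary_path_graph_morph: "x \<in> boundary_paths G \<Longrightarrow> graph_morph G x"
  by (simp add: boundary_paths_def)

lemma fst_shift: "fst (shift s x) = (\<chi> i. fst x $ i - enat (s $ i))"
  by (simp add: shift_def)

lemma vtx_shift [simp]: "vtx G (shift s x) p = vtx G x (p + s)"
  by (simp add: vtx_def shift_def)

lemma snd_shift [simp]: "snd (shift s x) a b = snd x (a + s) (b + s)"
  by (simp add: shift_def)

lemma leE_shift: "leE s (fst x) \<Longrightarrow> leE q (fst (shift s x)) \<longleftrightarrow> leE (q + s) (fst x)"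
  using leE_diff[of s "fst x" "q + s"] by (simp add: shift_def)

lemma fst_concat: "fst (concat G l y) = (\<chi> i. enat (deg G l $ i) + fst y $ i)"
  by (simp add: concat_def)

lemma vmin_e_concat_shift:
  assumes "leE s (fst y)" "s \<le> b"
  shows "vmin_e (deg G l + (b - s)) (fst (concat G l (shift s y))) = deg G l + (vmin_e b (fst y) - s)"
  unfolding fst_concat vmin_e_add fst_shift vmin_e_diff[OF assms] ..

lemma shift_graph_morph:
  assumes x: "graph_morph G x" and s: "leE s (fst x)"
  shows "graph_morph G (shift s x)"
  unfolding graph_morph_def
proof (intro conjI; intro allI impI)
  fix p q
  assume "p \<le> q \<and> leE q (fst (shift s x))"
  then have "snd x (p + s) (q + s) \<in> mor G \<and> deg G (snd x (p + s) (q + s)) = q + s - (p + s)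
    \<and> rg G (snd x (p + s) (q + s)) = vtx G x (p + s) \<and> sc G (snd x (p + s) (q + s)) = vtx G x (q + s)"
    using graph_morph_seg[OF x add_right_mono] leE_shift[OF s] by blast
  then show "snd (shift s x) p q \<in> mor G \<and> deg G (snd (shift s x) p q) = q - p
    \<and> rg G (snd (shift s x) p q) = rg G (snd (shift s x) p p)
    \<and> sc G (snd (shift s x) p q) = rg G (snd (shift s x) q q)"
    by (simp add: vtx_def)
next
  fix p
  assume "leE p (fst (shift s x))"
  then show "snd (shift s x) p p = ident G (rg G (snd (shift s x) p p))"
    using graph_morph_ident[OF x] leE_shift[OF s] by (simp add: vtx_def)
next
  fix p q r
  assume "p \<le> q \<and> q \<le> r \<and> leE r (fst (shift s x))"
  then show "cp G (snd (shift s x) p q) (snd (shift s x) q r) = snd (shift s x) p r"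
    using graph_morph_cp[OF x add_right_mono add_right_mono] leE_shift[OF s] by simp
qed

lemma shift_boundary_path:
  assumes x: "x \<in> boundary_paths G" and s: "leE s (fst x)"
  shows "shift s x \<in> boundary_paths G"
proof -
  obtain nx where nx: "leE nx (fst x)"
    and sink: "\<And>p i. nx \<le> p \<Longrightarrow> leE p (fst x) \<Longrightarrow> enat (p $ i) = fst x $ i \<Longrightarrow>
      {f \<in> mor G. rg G f = vtx G x p \<and> deg G f = unitv i} = {}"
    using x unfolding boundary_paths_def by blast
  have "nx - s + s = vmax nx s"
    by (simp add: vec_eq_iff max_def)
  moreover have "leE (vmax nx s) (fst x)"
    using nx s unfolding leE_def by (simp add: max_def)
  ultimately have "leE (nx - s) (fst (shift s x))"
    using leE_shift[OF s] by simp
  moreover have "{f \<in> mor G. rg G f = vtx G (shift s x) p \<and> deg G f = unitv i} = {}"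
    if p: "nx - s \<le> p" "leE p (fst (shift s x))"
      and i: "enat (p $ i) = fst (shift s x) $ i" for p i
  proof -
    have "nx \<le> p + s"
      using p(1) by (auto simp: less_eq_vec_def le_diff_conv)
    moreover have "enat ((p + s) $ i) = fst x $ i"
      using i leE_nth[OF s, of i] by (cases "fst x $ i") (auto simp: shift_def)
    ultimately show ?thesis
      using sink p(2) leE_shift[OF s] by simp
  qed
  ultimately show ?thesis
    unfolding boundary_paths_def using shift_graph_morph[OF boundary_path_graph_morph[OF x] s] by blast
qed

lemma snd_concat: "snd (concat G l y) a b = seg G (cp G l (snd y 0 (vmax b (deg G l) - deg G l))) a b"
  by (simp add: concat_def)

lemma leE_concat: "leE q (fst (concat G l y)) \<longleftrightarrow> leE (vmax q (deg G l) - deg G l) (fst y)"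
proof -
  have "enat (q $ i) \<le> enat (deg G l $ i) + fst y $ i
      \<longleftrightarrow> enat ((vmax q (deg G l) - deg G l) $ i) \<le> fst y $ i" for i
    by (cases "fst y $ i") auto
  then show ?thesis
    by (simp add: leE_def concat_def)
qed

section \<open>Factorisation in a k-graph\<close>

locale k_graph =
  fixes G :: "('v, 'a, 'k::finite) kg"
  assumes kgraph: "kgraph G"
begin

lemma rg_sc_in_obj: "f \<in> mor G \<Longrightarrow> rg G f \<in> obj G \<and> sc G f \<in> obj G"
  using kgraph unfolding kgraph_def by blast

lemma ident_props:
  "v \<in> obj G \<Longrightarrow>
   ident G v \<in> mor G \<and> rg G (ident G v) = v \<and> sc G (ident G v) = v \<and> deg G (ident G v) = 0"
  using kgraph unfolding kgraph_def by blast

lemma cp_props: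
  "f \<in> mor G \<Longrightarrow> g \<in> mor G \<Longrightarrow> sc G f = rg G g \<Longrightarrow>
   cp G f g \<in> mor G \<and> rg G (cp G f g) = rg G f \<and> sc G (cp G f g) = sc G g
     \<and> deg G (cp G f g) = deg G f + deg G g"
  using kgraph unfolding kgraph_def by blast

lemma cp_ident_left: "f \<in> mor G \<Longrightarrow> cp G (ident G (rg G f)) f = f"
  using kgraph unfolding kgraph_def by blast

lemma cp_ident_right: "f \<in> mor G \<Longrightarrow> cp G f (ident G (sc G f)) = f"
  using kgraph unfolding kgraph_def by blast

lemma cp_assoc:
  "f \<in> mor G \<Longrightarrow> g \<in> mor G \<Longrightarrow> h \<in> mor G \<Longrightarrow> sc G f = rg G g \<Longrightarrow> sc G g = rg G h \<Longrightarrow>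
   cp G (cp G f g) h = cp G f (cp G g h)"
  using kgraph unfolding kgraph_def by blast

lemma unique_factorization:
  "f \<in> mor G \<Longrightarrow> deg G f = m + n \<Longrightarrow>
   \<exists>!(g, h). g \<in> mor G \<and> h \<in> mor G \<and> sc G g = rg G h \<and> cp G g h = f
     \<and> deg G g = m \<and> deg G h = n"
  using kgraph unfolding kgraph_def by blast

lemma factorization:
  assumes "f \<in> mor G" "m \<le> deg G f"
  obtains g h where "g \<in> mor G" "h \<in> mor G" "sc G g = rg G h" "cp G g h = f"
    "deg G g = m" "deg G h = deg G f - m"
proof -
  have "deg G f = m + (deg G f - m)"
    using assms(2) by (simp add: ordered_cancel_comm_monoid_diff_class.add_diff_inverse)
  from unique_factorization[OF assms(1) this] show ?thesis
    using that by blast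
qed

lemma factorization_unique:
  assumes "g \<in> mor G" "h \<in> mor G" "sc G g = rg G h"
    "g' \<in> mor G" "h' \<in> mor G" "sc G g' = rg G h'"
    "cp G g h = cp G g' h'" "deg G g = deg G g'" "deg G h = deg G h'"
  shows "g = g' \<and> h = h'"
proof -
  have "cp G g h \<in> mor G" "deg G (cp G g h) = deg G g + deg G h"
    using cp_props assms by auto
  from unique_factorization[OF this] show ?thesis
    using assms by auto
qed

lemma deg_eq_0_ident:
  assumes "f \<in> mor G" "deg G f = 0"
  shows "f = ident G (rg G f)"
proof -
  have "rg G f \<in> obj G" "sc G f \<in> obj G"
    using rg_sc_in_obj assms by auto
  then have "ident G (rg G f) = f \<and> f = ident G (sc G f)"
    using assms ident_props cp_ident_left cp_ident_right
    by (intro factorization_unique) auto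
  then show ?thesis
    by simp
qed

lemma seg_eqI:
  assumes "a \<in> mor G" "b \<in> mor G" "c \<in> mor G" "sc G a = rg G b" "sc G b = rg G c"
    "f = cp G (cp G a b) c" "deg G a = p" "deg G b = q - p" "deg G c = deg G f - q"
  shows "seg G f p q = b"
  unfolding seg_def
proof (rule the_equality)
  fix b'
  assume "\<exists>a' c'. a' \<in> mor G \<and> b' \<in> mor G \<and> c' \<in> mor G \<and> sc G a' = rg G b' \<and> sc G b' = rg G c'
      \<and> f = cp G (cp G a' b') c' \<and> deg G a' = p \<and> deg G b' = q - p \<and> deg G c' = deg G f - q"
  then obtain a' c' where a'c': "a' \<in> mor G" "b' \<in> mor G" "c' \<in> mor G" "sc G a' = rg G b'"
      "sc G b' = rg G c'" "f = cp G (cp G a' b') c'" "deg G a' = p" "deg G b' = q - p"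
      "deg G c' = deg G f - q"
    by blast
  have ab: "cp G a b \<in> mor G" "sc G (cp G a b) = rg G c" "deg G (cp G a b) = p + (q - p)"
    using cp_props assms by auto
  have a'b': "cp G a' b' \<in> mor G" "sc G (cp G a' b') = rg G c'" "deg G (cp G a' b') = p + (q - p)"
    using cp_props a'c' by auto
  have "cp G a b = cp G a' b'"
    using factorization_unique[OF ab(1) assms(3) ab(2) a'b'(1) a'c'(3) a'b'(2)] assms a'c' ab a'b'
    by auto
  then show "b' = b"
    using factorization_unique[OF assms(1,2,4) a'c'(1,2,4)] assms a'c' by auto
qed (use assms in blast)

lemma seg_exists:
  assumes "f \<in> mor G" "p \<le> q" "q \<le> deg G f"
  obtains a c where "a \<in> mor G" "seg G f p q \<in> mor G" "c \<in> mor G"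
    "sc G a = rg G (seg G f p q)" "sc G (seg G f p q) = rg G c" "f = cp G (cp G a (seg G f p q)) c"
    "deg G a = p" "deg G (seg G f p q) = q - p" "deg G c = deg G f - q"
proof -
  obtain g c where gc: "g \<in> mor G" "c \<in> mor G" "sc G g = rg G c" "cp G g c = f"
    "deg G g = q" "deg G c = deg G f - q"
    using factorization[OF assms(1,3)] by metis
  obtain a b where ab: "a \<in> mor G" "b \<in> mor G" "sc G a = rg G b" "cp G a b = g"
    "deg G a = p" "deg G b = q - p"
    using factorization[OF gc(1)] assms(2) gc(5) by metis
  have "sc G b = rg G c"
    using cp_props[OF ab(1-3)] ab gc by auto
  moreover have "seg G f p q = b"
    using ab gc \<open>sc G b = rg G c\<close> by (intro seg_eqI[of a b c]) auto
  ultimately show ?thesis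
    using that ab gc by auto
qed

lemma seg_full: "f \<in> mor G \<Longrightarrow> seg G f 0 (deg G f) = f"
  using rg_sc_in_obj ident_props cp_ident_left cp_ident_right
  by (intro seg_eqI[of "ident G (rg G f)" f "ident G (sc G f)"]) auto

lemma seg_end: "f \<in> mor G \<Longrightarrow> seg G f (deg G f) (deg G f) = ident G (sc G f)"
  using rg_sc_in_obj ident_props cp_ident_right
  by (intro seg_eqI[of f "ident G (sc G f)" "ident G (sc G f)"]) auto

lemma seg_cp_prefix:
  assumes "f \<in> mor G" "g \<in> mor G" "sc G f = rg G g" "p \<le> q" "q \<le> deg G f"
  shows "seg G (cp G f g) p q = seg G f p q"
proof -
  obtain a c where ac: "a \<in> mor G" "seg G f p q \<in> mor G" "c \<in> mor G"
    "sc G a = rg G (seg G f p q)" "sc G (seg G f p q) = rg G c"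
    "f = cp G (cp G a (seg G f p q)) c" "deg G a = p" "deg G (seg G f p q) = q - p"
    "deg G c = deg G f - q"
    using seg_exists[OF assms(1,4,5)] by metis
  let ?b = "seg G f p q"
  have ab: "cp G a ?b \<in> mor G" "sc G (cp G a ?b) = rg G c"
    using cp_props ac by auto
  have "sc G c = rg G g"
    using assms(3) ac(6) cp_props[OF ab(1) ac(3) ab(2)] by auto
  then have "cp G c g \<in> mor G" "deg G (cp G c g) = deg G c + deg G g" "rg G (cp G c g) = rg G c"
    and "cp G f g = cp G (cp G a ?b) (cp G c g)"
    using cp_props[OF ac(3) assms(2)] cp_assoc[OF ab(1) ac(3) assms(2) ab(2)] ac(6) by auto
  moreover have "deg G (cp G f g) - q = deg G c + deg G g"
    using cp_props[OF assms(1-3)] ac(9) assms(5) unfolding vec_eq_iff less_eq_vec_def by simp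
  ultimately show ?thesis
    using ac assms by (intro seg_eqI[OF ac(1,2) _ ac(4)]) auto
qed

lemma seg_cp_suffix:
  assumes "f \<in> mor G" "g \<in> mor G" "sc G f = rg G g" "p \<le> deg G f"
  shows "seg G (cp G f g) p (deg G f + deg G g) = cp G (seg G f p (deg G f)) g"
proof -
  obtain a b where ab: "a \<in> mor G" "b \<in> mor G" "sc G a = rg G b" "cp G a b = f"
    "deg G a = p" "deg G b = deg G f - p"
    using factorization[OF assms(1,4)] by metis
  have "sc G f = sc G b" "sc G b = rg G g" "sc G b \<in> obj G"
    using ab assms(3) cp_props[OF ab(1-3)] rg_sc_in_obj[OF ab(2)] by auto
  have "seg G f p (deg G f) = b"
  proof (rule seg_eqI[of a b "ident G (sc G b)"])
    show "f = cp G (cp G a b) (ident G (sc G b))"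
      using cp_ident_right[OF assms(1)] ab(4) \<open>sc G f = sc G b\<close> by simp
  qed (use ab \<open>sc G b \<in> obj G\<close> ident_props in auto)
  moreover have "seg G (cp G f g) p (deg G f + deg G g) = cp G b g"
  proof (rule seg_eqI[of a "cp G b g" "ident G (sc G g)"])
    show "cp G f g = cp G (cp G a (cp G b g)) (ident G (sc G g))"
      using ab assms cp_assoc cp_props \<open>sc G b = rg G g\<close> cp_ident_right by metis
    show "deg G (cp G b g) = deg G f + deg G g - p"
      using cp_props[OF ab(2) assms(2) \<open>sc G b = rg G g\<close>] ab(6) assms(4)
      unfolding vec_eq_iff less_eq_vec_def by simp
  qed (use ab assms \<open>sc G b = rg G g\<close> cp_props rg_sc_in_obj ident_props in auto)
  ultimately show ?thesis
    by simp
qed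

lemma seg_split:
  assumes "f \<in> mor G" "p \<le> q" "q \<le> r" "r \<le> deg G f"
  shows "cp G (seg G f p q) (seg G f q r) = seg G f p r \<and> sc G (seg G f p q) = rg G (seg G f q r)"
proof -
  have "p \<le> r"
    using assms by (meson order.trans)
  let ?X = "seg G f p r"
  obtain A D where AD: "A \<in> mor G" "?X \<in> mor G" "D \<in> mor G" "sc G A = rg G ?X"
    "sc G ?X = rg G D" "f = cp G (cp G A ?X) D" "deg G A = p"
    "deg G ?X = r - p" "deg G D = deg G f - r"
    using seg_exists[OF assms(1) \<open>p \<le> r\<close> assms(4)] by metis
  have "q - p \<le> deg G ?X"
    using AD(8) assms unfolding less_eq_vec_def by (simp add: diff_le_mono)
  then obtain B C where BC: "B \<in> mor G" "C \<in> mor G" "sc G B = rg G C" "cp G B C = ?X"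
    "deg G B = q - p" "deg G C = deg G ?X - (q - p)"
    using factorization[OF AD(2)] by blast
  have dC: "deg G C = r - q"
    using BC(6) AD(8) assms(2,3) unfolding vec_eq_iff less_eq_vec_def by simp
  have rB: "rg G B = rg G ?X" "sc G C = sc G ?X"
    using cp_props[OF BC(1-3)] BC(4) by auto
  have AB: "cp G A B \<in> mor G" "sc G (cp G A B) = rg G C" "deg G (cp G A B) = q"
    using cp_props[OF AD(1) BC(1)] AD rB BC assms(2) unfolding vec_eq_iff less_eq_vec_def by auto
  have CD: "cp G C D \<in> mor G" "rg G (cp G C D) = rg G C" "deg G (cp G C D) = deg G f - q"
    using cp_props[OF BC(2) AD(3)] AD(5,9) rB dC assms(3,4) unfolding vec_eq_iff less_eq_vec_def
    by auto
  have f1: "f = cp G (cp G (cp G A B) C) D"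
    using AD(4,6) BC(3,4) rB cp_assoc[OF AD(1) BC(1,2)] by simp
  then have f2: "f = cp G (cp G A B) (cp G C D)"
    using cp_assoc[OF AB(1) BC(2) AD(3) AB(2)] AD(5) rB by simp
  have "seg G f p q = B"
    using AD BC(1-5) rB CD f2 by (intro seg_eqI[OF AD(1) BC(1) CD(1)]) auto
  moreover have "seg G f q r = C"
    using AD BC(1-5) dC rB AB f1 by (intro seg_eqI[OF AB(1) BC(2) AD(3) AB(2)]) auto
  ultimately show ?thesis
    using BC by auto
qed

lemma seg_mor:
  "f \<in> mor G \<Longrightarrow> p \<le> q \<Longrightarrow> q \<le> deg G f \<Longrightarrow> seg G f p q \<in> mor G \<and> deg G (seg G f p q) = q - p"
  by (metis seg_exists)

lemma seg_self:
  assumes "f \<in> mor G" "p \<le> deg G f"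
  shows "seg G f p p = ident G (rg G (seg G f p p))"
  using seg_mor[OF assms(1) order.refl assms(2)] deg_eq_0_ident by simp

lemma seg_rg_sc:
  assumes "f \<in> mor G" "p \<le> q" "q \<le> deg G f"
  shows "rg G (seg G f p q) = rg G (seg G f p p) \<and> sc G (seg G f p q) = rg G (seg G f q q)"
proof -
  have "p \<le> deg G f"
    using assms by (meson order.trans)
  then have "sc G (seg G f p p) = rg G (seg G f p p)"
    using seg_self[OF assms(1)] seg_mor[OF assms(1) order.refl] rg_sc_in_obj ident_props by metis
  then show ?thesis
    using seg_split[OF assms(1) order.refl assms(2,3)] seg_split[OF assms(1,2) order.refl assms(3)]
    by simp
qed

lemma seg_path:
  assumes "graph_morph G x" "a \<le> b" "b \<le> c" "leE c (fst x)"
  shows "seg G (snd x 0 c) a b = snd x a b"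
proof -
  have "leE a (fst x)" "leE b (fst x)"
    using assms le_leE_trans by blast+
  note S = graph_morph_seg[OF assms(1)]
  show ?thesis
  proof (rule seg_eqI[of "snd x 0 a" "snd x a b" "snd x b c"])
    show "snd x 0 c = cp G (cp G (snd x 0 a) (snd x a b)) (snd x b c)"
      using graph_morph_cp[OF assms(1) zero_le assms(2) \<open>leE b (fst x)\<close>]
        graph_morph_cp[OF assms(1) zero_le assms(3,4)] by simp
  qed (use S[OF zero_le] S[OF assms(2)] S[OF assms(3)] assms \<open>leE a (fst x)\<close>
       \<open>leE b (fst x)\<close> in auto)
qed

definition concat_upto :: "'a \<Rightarrow> ('a, 'k) path \<Rightarrow> nat ^ 'k \<Rightarrow> 'a" where
  "concat_upto l y b = cp G l (snd y 0 (vmax b (deg G l) - deg G l))"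

lemma snd_concat_upto: "snd (concat G l y) a b = seg G (concat_upto l y b) a b"
  by (simp add: snd_concat concat_upto_def)

context
  fixes l y
  assumes l: "l \<in> mor G" and y: "graph_morph G y" and ly: "sc G l = vtx G y 0"
begin

lemma concat_upto_props:
  assumes "leE b (fst (concat G l y))"
  shows "concat_upto l y b \<in> mor G \<and> deg G (concat_upto l y b) = vmax b (deg G l)
    \<and> rg G (concat_upto l y b) = rg G l \<and> sc G (concat_upto l y b) = vtx G y (vmax b (deg G l) - deg G l)"
proof -
  have "leE (vmax b (deg G l) - deg G l) (fst y)"
    using assms by (simp only: leE_concat)
  moreover have "deg G l + (vmax b (deg G l) - deg G l) = vmax b (deg G l)"
    by (simp add: vec_eq_iff)
  ultimately show ?thesis
    using cp_props[OF l] graph_morph_seg[OF y zero_le] ly unfolding concat_upto_def by simp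
qed

lemma le_deg_concat_upto: "leE b (fst (concat G l y)) \<Longrightarrow> b \<le> deg G (concat_upto l y b)"
  using concat_upto_props by (simp add: less_eq_vec_def)

lemma seg_concat_upto:
  assumes "p \<le> q" "q \<le> b" "leE b (fst (concat G l y))"
  shows "seg G (concat_upto l y b) p q = seg G (concat_upto l y q) p q"
proof -
  let ?q = "vmax q (deg G l) - deg G l" and ?b = "vmax b (deg G l) - deg G l"
  have qb: "?q \<le> ?b"
    using assms(2) by (rule vmax_diff_mono)
  have b: "leE ?b (fst y)"
    using assms(3) by (simp only: leE_concat)
  have q: "leE q (fst (concat G l y))"
    using le_leE_trans assms by blast
  note Y = graph_morph_seg[OF y zero_le le_leE_trans[OF qb b]] graph_morph_seg[OF y qb b]
  have "concat_upto l y b = cp G l (cp G (snd y 0 ?q) (snd y ?q ?b))"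
    unfolding concat_upto_def using graph_morph_cp[OF y zero_le qb b] by simp
  also have "\<dots> = cp G (concat_upto l y q) (snd y ?q ?b)"
    unfolding concat_upto_def using cp_assoc[OF l] Y ly by simp
  finally show ?thesis
    using seg_cp_prefix[OF _ _ _ assms(1)] concat_upto_props[OF q] le_deg_concat_upto[OF q] Y
    by simp
qed

lemma concat_graph_morph: "graph_morph G (concat G l y)"
  unfolding graph_morph_def snd_concat_upto
proof (intro conjI; intro allI impI)
  fix p q
  assume pq: "p \<le> q \<and> leE q (fst (concat G l y))"
  note U = concat_upto_props[OF conjunct2[OF pq]] le_deg_concat_upto[OF conjunct2[OF pq]]
  show "seg G (concat_upto l y q) p q \<in> mor G \<and> deg G (seg G (concat_upto l y q) p q) = q - p
    \<and> rg G (seg G (concat_upto l y q) p q) = rg G (seg G (concat_upto l y p) p p)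
    \<and> sc G (seg G (concat_upto l y q) p q) = rg G (seg G (concat_upto l y q) q q)"
    using seg_mor[of _ p q] seg_rg_sc[of _ p q] seg_concat_upto[of p p q] U pq by simp
next
  fix p
  assume "leE p (fst (concat G l y))"
  then show "seg G (concat_upto l y p) p p = ident G (rg G (seg G (concat_upto l y p) p p))"
    using seg_self concat_upto_props le_deg_concat_upto by blast
next
  fix p q r
  assume pqr: "p \<le> q \<and> q \<le> r \<and> leE r (fst (concat G l y))"
  then have "r \<le> deg G (concat_upto l y r)" "concat_upto l y r \<in> mor G"
    using concat_upto_props le_deg_concat_upto by blast+
  then show "cp G (seg G (concat_upto l y q) p q) (seg G (concat_upto l y r) q r)
    = seg G (concat_upto l y r) p r"
    using seg_concat_upto[of p q r] seg_split[OF \<open>concat_upto l y r \<in> mor G\<close> _ _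
        \<open>r \<le> deg G (concat_upto l y r)\<close>, of p q] pqr by simp
qed

lemma vtx_concat:
  assumes "deg G l \<le> p" "leE p (fst (concat G l y))"
  shows "vtx G (concat G l y) p = vtx G y (p - deg G l)"
proof -
  have "vmax p (deg G l) = p"
    using assms(1) by (rule vmax_absorb1)
  then have "seg G (concat_upto l y p) p p = ident G (vtx G y (p - deg G l))"
    using seg_end concat_upto_props[OF assms(2)] by metis
  moreover have "vtx G y (p - deg G l) \<in> obj G"
    using concat_upto_props[OF assms(2)] \<open>vmax p (deg G l) = p\<close> rg_sc_in_obj by metis
  ultimately show ?thesis
    unfolding vtx_def snd_concat_upto using ident_props by simp
qed

lemma snd_concat_across:
  assumes "p \<le> deg G l" "leE q (fst y)"
  shows "snd (concat G l y) p (deg G l + q) = cp G (seg G l p (deg G l)) (snd y 0 q)"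
proof -
  have "vmax (deg G l + q) (deg G l) - deg G l = q"
    by (simp add: vec_eq_iff)
  then have "snd (concat G l y) p (deg G l + q) = seg G (cp G l (snd y 0 q)) p (deg G l + q)"
    by (simp add: snd_concat)
  moreover note Y = graph_morph_seg[OF y zero_le assms(2)]
  ultimately show ?thesis
    using seg_cp_suffix[OF l conjunct1[OF Y] _ assms(1)] ly by simp
qed

lemma concat_boundary_path:
  assumes "y \<in> boundary_paths G"
  shows "concat G l y \<in> boundary_paths G"
proof -
  obtain ny where ny: "leE ny (fst y)"
    and sink: "\<And>p i. ny \<le> p \<Longrightarrow> leE p (fst y) \<Longrightarrow> enat (p $ i) = fst y $ i \<Longrightarrow>
      {f \<in> mor G. rg G f = vtx G y p \<and> deg G f = unitv i} = {}"
    using assms unfolding boundary_paths_def by blast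
  have "leE (deg G l + ny) (fst (concat G l y))"
    using ny by (simp add: fst_concat leE_add)
  moreover have "{f \<in> mor G. rg G f = vtx G (concat G l y) p \<and> deg G f = unitv i} = {}"
    if p: "deg G l + ny \<le> p" "leE p (fst (concat G l y))"
      and i: "enat (p $ i) = fst (concat G l y) $ i" for p i
  proof -
    have "deg G l $ j \<le> p $ j \<and> ny $ j \<le> p $ j - deg G l $ j" for j
      using less_eq_vec_nth[OF p(1), of j] by simp
    then have "deg G l \<le> p" "ny \<le> p - deg G l"
      unfolding less_eq_vec_def by simp_all
    moreover have "leE (p - deg G l) (fst y)"
      using p(2) \<open>deg G l \<le> p\<close> by (simp add: leE_concat vmax_absorb1)
    moreover have "enat ((p - deg G l) $ i) = fst y $ i"
      using i by (cases "fst y $ i") (auto simp: fst_concat)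
    ultimately show ?thesis
      using sink vtx_concat p(2) by simp
  qed
  ultimately show ?thesis
    unfolding boundary_paths_def using concat_graph_morph by blast
qed

end

end

section \<open>Keys of morphisms of the extension\<close>

definition Pkey :: "('a, 'k::finite) path \<times> (nat ^ 'k) \<times> (nat ^ 'k) \<Rightarrow> 'a \<times> (nat ^ 'k) \<times> (nat ^ 'k)" where
  "Pkey t = (case t of (x, m, n) \<Rightarrow>
     (snd x (vmin_e m (fst x)) (vmin_e n (fst x)), m - vmin_e m (fst x), n - m))"

definition Vkey :: "('v, 'a, 'k::finite) kg \<Rightarrow> ('a, 'k) path \<times> (nat ^ 'k) \<Rightarrow> 'v \<times> (nat ^ 'k)" where
  "Vkey G t = (case t of (x, m) \<Rightarrow> (vtx G x (vmin_e m (fst x)), m - vmin_e m (fst x)))"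

lemma Prel_eq_ker_rel: "Prel G = ker_rel (Pset G) Pkey"
  unfolding Prel_def ker_rel_def Pkey_def by auto

lemma Vrel_eq_ker_rel: "Vrel G = ker_rel (Vset G) (Vkey G)"
  unfolding Vrel_def ker_rel_def Vkey_def by auto

lemma ext_simps:
  "mor (ext G) = Inl ` mor G \<union> Inr ` (Pset G // Prel G)"
  "rg (ext G) (Inl l) = Inl (rg G l)"
  "rg (ext G) (Inr C) = (case rep C of (x, m, n) \<Rightarrow>
     if leE m (fst x) then Inl (vtx G x m) else Inr (Vcls G x m))"
  "sc (ext G) (Inl l) = Inl (sc G l)"
  "sc (ext G) (Inr C) = (case rep C of (x, m, n) \<Rightarrow> Inr (Vcls G x n))"
  "cp (ext G) (Inl l) (Inl l') = Inl (cp G l l')"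
  "cp (ext G) (Inl l) (Inr C) = (case rep C of (x, m, n) \<Rightarrow>
     Inr (Pcls G (concat G l (shift m x)) 0 (deg G l + n - m)))"
  "cp (ext G) (Inr C) (Inr D) = (case rep C of (x, m, n) \<Rightarrow> case rep D of (y, p, q) \<Rightarrow>
     Inr (Pcls G (concat G (snd x 0 (vmin_e n (fst x))) (shift (vmin_e p (fst y)) y)) m (n + q - p)))"
  "deg (ext G) (Inl l) = deg G l"
  "deg (ext G) (Inr C) = (case rep C of (x, m, n) \<Rightarrow> n - m)"
  unfolding ext_def by simp_all

lemma mor_ext_iff [simp]:
  "Inl l \<in> mor (ext G) \<longleftrightarrow> l \<in> mor G"
  "Inr C \<in> mor (ext G) \<longleftrightarrow> C \<in> Pset G // Prel G"
  by (auto simp: ext_simps)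

lemma Pset_iff: "(x, m, n) \<in> Pset G \<longleftrightarrow> x \<in> boundary_paths G \<and> m \<le> n \<and> \<not> leE n (fst x)"
  by (simp add: Pset_def)

lemma rep_in_Pset: "C \<in> Pset G // Prel G \<Longrightarrow> rep C \<in> Pset G"
  using rep_in_quotient_ker_rel[of C "Pset G" Pkey] by (simp add: Prel_eq_ker_rel)

lemma Pset_quotient_eqI:
  "C \<in> Pset G // Prel G \<Longrightarrow> C' \<in> Pset G // Prel G \<Longrightarrow> Pkey (rep C) = Pkey (rep C') \<Longrightarrow> C = C'"
  using quotient_ker_rel_eqI[of C "Pset G" Pkey C'] by (simp add: Prel_eq_ker_rel)

lemma Pcls_in_quotient:
  assumes "(x, m, n) \<in> Pset G"
  shows "Pcls G x m n \<in> Pset G // Prel G \<and> Pkey (rep (Pcls G x m n)) = Pkey (x, m, n)"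
  using quotientI[OF assms, of "Prel G"] rep_ker_rel_class[OF assms, of Pkey]
  by (simp add: Pcls_def Prel_eq_ker_rel)

lemma Vkey_rep_Vcls: "(x, m) \<in> Vset G \<Longrightarrow> Vkey G (rep (Vcls G x m)) = Vkey G (x, m)"
  using rep_ker_rel_class[of "(x, m)" "Vset G" "Vkey G"] by (simp add: Vcls_def Vrel_eq_ker_rel)

lemma Pset_seg:
  assumes "(x, m, n) \<in> Pset G"
  shows "snd x (vmin_e m (fst x)) (vmin_e n (fst x)) \<in> mor G
    \<and> deg G (snd x (vmin_e m (fst x)) (vmin_e n (fst x))) = vmin_e n (fst x) - vmin_e m (fst x)
    \<and> rg G (snd x (vmin_e m (fst x)) (vmin_e n (fst x))) = vtx G x (vmin_e m (fst x))
    \<and> sc G (snd x (vmin_e m (fst x)) (vmin_e n (fst x))) = vtx G x (vmin_e n (fst x))"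
  using assms boundary_path_graph_morph[of x G] vmin_e_mono leE_vmin_e
  by (intro graph_morph_seg) (auto simp: Pset_iff)

definition ext_base :: "'a + (('a, 'k::finite) path \<times> (nat ^ 'k) \<times> (nat ^ 'k)) set \<Rightarrow> 'a" where
  "ext_base f = (case f of Inl l \<Rightarrow> l
     | Inr C \<Rightarrow> (case rep C of (x, m, n) \<Rightarrow> snd x (vmin_e m (fst x)) (vmin_e n (fst x))))"

definition ext_rg_offset :: "'a + (('a, 'k::finite) path \<times> (nat ^ 'k) \<times> (nat ^ 'k)) set \<Rightarrow> nat ^ 'k" where
  "ext_rg_offset f = (case f of Inl l \<Rightarrow> 0
     | Inr C \<Rightarrow> (case rep C of (x, m, n) \<Rightarrow> m - vmin_e m (fst x)))"

definition ext_sc_offset :: "'a + (('a, 'k::finite) path \<times> (nat ^ 'k) \<times> (nat ^ 'k)) set \<Rightarrow> nat ^ 'k" where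
  "ext_sc_offset f = (case f of Inl l \<Rightarrow> 0
     | Inr C \<Rightarrow> (case rep C of (x, m, n) \<Rightarrow> n - vmin_e n (fst x)))"

definition ext_key :: "('v, 'a, 'k::finite) kg \<Rightarrow> 'a + (('a, 'k) path \<times> (nat ^ 'k) \<times> (nat ^ 'k)) set
    \<Rightarrow> 'a \<times> (nat ^ 'k) \<times> (nat ^ 'k)" where
  "ext_key G f = (ext_base f, ext_rg_offset f, deg (ext G) f)"

definition ext_obj_key :: "('v, 'a, 'k::finite) kg \<Rightarrow> 'v + (('a, 'k) path \<times> (nat ^ 'k)) set
    \<Rightarrow> 'v \<times> (nat ^ 'k)" where
  "ext_obj_key G v = (case v of Inl u \<Rightarrow> (u, 0) | Inr V \<Rightarrow> Vkey G (rep V))"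

lemma ext_key_Inr: "ext_key G (Inr C) = Pkey (rep C)"
  by (cases "rep C") (simp add: ext_key_def ext_base_def ext_rg_offset_def ext_simps Pkey_def)

lemma ext_key_Pcls:
  "(x, m, n) \<in> Pset G \<Longrightarrow>
   Inr (Pcls G x m n) \<in> mor (ext G)
   \<and> ext_key G (Inr (Pcls G x m n)) = (snd x (vmin_e m (fst x)) (vmin_e n (fst x)), m - vmin_e m (fst x), n - m)"
  using Pcls_in_quotient[of x m n] by (simp add: ext_key_Inr Pkey_def)

lemma mor_extE:
  assumes "f \<in> mor (ext G)"
  obtains (Inl) l where "f = Inl l" "l \<in> mor G"
  | (Inr) C x m n where "f = Inr C" "C \<in> Pset G // Prel G" "rep C = (x, m, n)" "(x, m, n) \<in> Pset G"
proof (cases f)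
  case (Inr C)
  moreover obtain x m n where "rep C = (x, m, n)"
    by (metis prod_cases3)
  ultimately show ?thesis
    using assms rep_in_Pset[of C G] that(2) by simp
qed (use assms that(1) in simp)

lemma ext_base_mor:
  assumes "f \<in> mor (ext G)"
  shows "ext_base f \<in> mor G"
  using assms
proof (cases rule: mor_extE)
  case (Inr C x m n)
  then show ?thesis
    using Pset_seg[OF Inr(4)] by (simp add: ext_base_def)
qed (simp add: ext_base_def)

lemma deg_ext_base_eq_0:
  assumes "f \<in> mor (ext G)" "ext_rg_offset f $ i \<noteq> 0"
  shows "deg G (ext_base f) $ i = 0"
  using assms(1)
proof (cases rule: mor_extE)
  case (Inr C x m n)
  then have "vmin_e n (fst x) $ i = vmin_e m (fst x) $ i"
    using assms(2) by (intro vmin_e_nth_truncated) (auto simp: ext_rg_offset_def Pset_iff)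
  then show ?thesis
    using Inr Pset_seg[OF Inr(4)] by (simp add: ext_base_def)
qed (use assms(2) in \<open>simp add: ext_rg_offset_def\<close>)

lemma ext_offset_balance:
  assumes "f \<in> mor (ext G)"
  shows "ext_rg_offset f + deg (ext G) f = deg G (ext_base f) + ext_sc_offset f"
  using assms
proof (cases rule: mor_extE)
  case (Inr C x m n)
  let ?mm = "vmin_e m (fst x)" and ?nn = "vmin_e n (fst x)"
  have "m \<le> n" "?mm \<le> ?nn" "?mm \<le> m" "?nn \<le> n"
    using Inr(4) by (simp_all add: Pset_iff vmin_e_mono vmin_e_le)
  then have "(m - ?mm) + (n - m) = (?nn - ?mm) + (n - ?nn)"
    unfolding vec_eq_iff less_eq_vec_def by simp
  then show ?thesis
    using Inr Pset_seg[OF Inr(4)]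
    by (simp add: ext_base_def ext_rg_offset_def ext_sc_offset_def ext_simps)
qed (simp_all add: ext_base_def ext_rg_offset_def ext_sc_offset_def ext_simps)

lemma ext_offset_balance_nth:
  "f \<in> mor (ext G) \<Longrightarrow>
   ext_rg_offset f $ i + deg (ext G) f $ i = deg G (ext_base f) $ i + ext_sc_offset f $ i"
  using ext_offset_balance by (metis vector_add_component)

lemma ext_sc_offset_Inr:
  assumes "C \<in> Pset G // Prel G"
  shows "ext_sc_offset (Inr C) \<noteq> 0"
proof
  obtain x m n where rep: "rep C = (x, m, n)"
    by (cases "rep C")
  assume "ext_sc_offset (Inr C) = 0"
  then have "n \<le> vmin_e n (fst x)"
    using rep unfolding ext_sc_offset_def vec_eq_iff less_eq_vec_def by simp
  then have "leE n (fst x)"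
    using vmin_e_le vmin_e_eq_iff by (metis order.antisym)
  then show False
    using rep_in_Pset[OF assms] rep by (simp add: Pset_iff)
qed

lemma deg_ext_base_le:
  assumes "f \<in> mor (ext G)"
  shows "deg G (ext_base f) \<le> deg (ext G) f"
  unfolding less_eq_vec_def
proof
  fix i
  show "deg G (ext_base f) $ i \<le> deg (ext G) f $ i"
  proof (cases "ext_rg_offset f $ i = 0")
    case True
    then show ?thesis
      using ext_offset_balance_nth[OF assms, of i] by simp
  qed (simp add: deg_ext_base_eq_0[OF assms])
qed

lemma deg_ext_base_nth:
  assumes "f \<in> mor (ext G)" "ext_sc_offset f $ i = 0"
  shows "deg G (ext_base f) $ i = deg (ext G) f $ i"
proof -
  have "ext_rg_offset f $ i + deg (ext G) f $ i = deg G (ext_base f) $ i"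
    using ext_offset_balance_nth[OF assms(1), of i] assms(2) by simp
  then show ?thesis
    using deg_ext_base_eq_0[OF assms(1), of i] by (cases "ext_rg_offset f $ i = 0") auto
qed

lemma ext_obj_key_rg:
  assumes "f \<in> mor (ext G)"
  shows "ext_obj_key G (rg (ext G) f) = (rg G (ext_base f), ext_rg_offset f)"
  using assms
proof (cases rule: mor_extE)
  case (Inr C x m n)
  show ?thesis
  proof (cases "leE m (fst x)")
    case True
    then show ?thesis
      using Inr Pset_seg[OF Inr(4)] vmin_e_eq_iff[of m "fst x"]
      by (simp add: ext_obj_key_def ext_base_def ext_rg_offset_def ext_simps)
  next
    case False
    then have "(x, m) \<in> Vset G"
      using Inr by (simp add: Vset_def Pset_iff)
    then show ?thesis
      using Inr Pset_seg[OF Inr(4)] False Vkey_rep_Vcls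
      by (simp add: ext_obj_key_def ext_base_def ext_rg_offset_def ext_simps Vkey_def)
  qed
qed (simp add: ext_obj_key_def ext_base_def ext_rg_offset_def ext_simps)

lemma ext_obj_key_sc:
  assumes "f \<in> mor (ext G)"
  shows "ext_obj_key G (sc (ext G) f) = (sc G (ext_base f), ext_sc_offset f)"
  using assms
proof (cases rule: mor_extE)
  case (Inr C x m n)
  then have "(x, n) \<in> Vset G"
    by (simp add: Vset_def Pset_iff)
  then show ?thesis
    using Inr Pset_seg[OF Inr(4)] Vkey_rep_Vcls
    by (simp add: ext_obj_key_def ext_base_def ext_sc_offset_def ext_simps Vkey_def)
qed (simp add: ext_obj_key_def ext_base_def ext_sc_offset_def ext_simps)

lemma deg_ext_base_add_eq_vmax:
  assumes l: "l \<in> mor (ext G)" and a: "a \<in> mor (ext G)" and m: "m \<in> mor (ext G)"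
    and b: "b \<in> mor (ext G)"
    and offsets: "ext_rg_offset a = ext_sc_offset l" "ext_rg_offset b = ext_sc_offset m"
    and "deg (ext G) l + deg (ext G) a = vmax (deg (ext G) l) (deg (ext G) m)"
    and "deg G (ext_base l) + deg G (ext_base a) = deg G (ext_base m) + deg G (ext_base b)"
  shows "deg G (ext_base l) + deg G (ext_base a) = vmax (deg G (ext_base l)) (deg G (ext_base m))"
  unfolding vec_eq_iff
proof
  fix i
  have "deg G (ext_base a) $ i = 0" if "deg G (ext_base l) $ i \<noteq> deg (ext G) l $ i"
  proof -
    have "ext_rg_offset a $ i \<noteq> 0"
      using that deg_ext_base_nth[OF l, of i] offsets(1) by auto
    then show ?thesis
      by (rule deg_ext_base_eq_0[OF a])
  qed
  moreover have "deg G (ext_base b) $ i = 0" if "deg G (ext_base m) $ i \<noteq> deg (ext G) m $ i"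
  proof -
    have "ext_rg_offset b $ i \<noteq> 0"
      using that deg_ext_base_nth[OF m, of i] offsets(2) by auto
    then show ?thesis
      by (rule deg_ext_base_eq_0[OF b])
  qed
  moreover have "deg G (ext_base a) $ i \<le> deg (ext G) a $ i"
    using deg_ext_base_le[OF a] by (simp add: less_eq_vec_def)
  moreover have "deg (ext G) l $ i + deg (ext G) a $ i = max (deg (ext G) l $ i) (deg (ext G) m $ i)"
    using arg_cong[OF assms(7), of "\<lambda>v. v $ i"] by simp
  moreover have "deg G (ext_base l) $ i + deg G (ext_base a) $ i
      = deg G (ext_base m) $ i + deg G (ext_base b) $ i"
    using arg_cong[OF assms(8), of "\<lambda>v. v $ i"] by simp
  ultimately have "deg G (ext_base l) $ i + deg G (ext_base a) $ i
      = max (deg G (ext_base l) $ i) (deg G (ext_base m) $ i)"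
    by (rule add_eq_max_nat)
  then show "(deg G (ext_base l) + deg G (ext_base a)) $ i
      = vmax (deg G (ext_base l)) (deg G (ext_base m)) $ i"
    by simp
qed

lemma ext_sc_offset_eq_0_iff:
  assumes "f \<in> mor (ext G)"
  shows "ext_sc_offset f = 0 \<longleftrightarrow> isl f"
  using assms by (cases rule: mor_extE) (auto simp: ext_sc_offset_def dest: ext_sc_offset_Inr)

lemma ext_key_inj: "inj_on (ext_key G) (mor (ext G))"
proof (rule inj_onI)
  fix f g
  assume f: "f \<in> mor (ext G)" and g: "g \<in> mor (ext G)" and key: "ext_key G f = ext_key G g"
  then have "ext_sc_offset f = ext_sc_offset g"
    using ext_offset_balance[OF f] ext_offset_balance[OF g] by (simp add: ext_key_def)
  then have "isl f \<longleftrightarrow> isl g"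
    using ext_sc_offset_eq_0_iff[OF f] ext_sc_offset_eq_0_iff[OF g] by simp
  with f g key show "f = g"
  proof (cases f; cases g)
    fix C C'
    assume "f = Inr C" "g = Inr C'"
    then show "f = g"
      using f g key by (simp add: ext_key_Inr Pset_quotient_eqI)
  qed (simp_all add: ext_key_def ext_base_def)
qed

section \<open>Composition in the extension\<close>

context k_graph
begin

lemma ext_key_concat_shift:
  assumes l: "l \<in> mor G" and y: "y \<in> boundary_paths G" and s: "leE s (fst y)"
    and ly: "sc G l = vtx G y s" and sb: "s \<le> b" and b: "\<not> leE b (fst y)"
    and a: "a \<le> deg G l + (b - s)" and a': "vmin_e a (fst (concat G l (shift s y))) \<le> deg G l"
  shows "Inr (Pcls G (concat G l (shift s y)) a (deg G l + (b - s))) \<in> mor (ext G)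
    \<and> ext_key G (Inr (Pcls G (concat G l (shift s y)) a (deg G l + (b - s))))
      = (cp G (seg G l (vmin_e a (fst (concat G l (shift s y)))) (deg G l)) (snd y s (vmin_e b (fst y))),
         a - vmin_e a (fst (concat G l (shift s y))), deg G l + (b - s) - a)"
proof -
  let ?y = "shift s y" and ?bb = "vmin_e b (fst y)"
  let ?z = "concat G l ?y" and ?N = "deg G l + (b - s)"
  have ys: "?y \<in> boundary_paths G"
    by (rule shift_boundary_path[OF y s])
  have gm: "graph_morph G ?y" and ly': "sc G l = vtx G ?y 0"
    using boundary_path_graph_morph[OF ys] ly by simp_all
  have "s \<le> ?bb"
    using vmin_e_mono[OF sb, of "fst y"] vmin_e_eq_iff[of s "fst y"] s by simp
  then have "b - s + s = b" "?bb - s + s = ?bb"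
    using sb unfolding vec_eq_iff less_eq_vec_def by simp_all
  have "?z \<in> boundary_paths G"
    by (rule concat_boundary_path[OF l gm ly' ys])
  moreover have "\<not> leE ?N (fst ?z)"
    unfolding fst_concat leE_add leE_shift[OF s] \<open>b - s + s = b\<close> by (rule b)
  ultimately have P: "(?z, a, ?N) \<in> Pset G"
    using a by (simp add: Pset_iff)
  have "vmin_e ?N (fst ?z) = deg G l + (?bb - s)"
    by (rule vmin_e_concat_shift[OF s sb])
  moreover have "leE (?bb - s) (fst ?y)"
    unfolding leE_shift[OF s] \<open>?bb - s + s = ?bb\<close> by (rule leE_vmin_e)
  then have "snd ?z (vmin_e a (fst ?z)) (deg G l + (?bb - s))
      = cp G (seg G l (vmin_e a (fst ?z)) (deg G l)) (snd y s ?bb)"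
    using snd_concat_across[OF l gm ly' a'] \<open>?bb - s + s = ?bb\<close> by simp
  ultimately show ?thesis
    using ext_key_Pcls[OF P] by simp
qed

lemma ext_cp_Inl_Inr:
  assumes l: "l \<in> mor G" and C: "C \<in> Pset G // Prel G"
    and lC: "sc G l = rg G (ext_base (Inr C))" and off: "ext_rg_offset (Inr C) = 0"
  shows "cp (ext G) (Inl l) (Inr C) \<in> mor (ext G)
    \<and> ext_key G (cp (ext G) (Inl l) (Inr C)) = (cp G l (ext_base (Inr C)), 0, deg G l + deg (ext G) (Inr C))"
proof -
  obtain x m n where rep: "rep C = (x, m, n)"
    by (metis prod_cases3)
  have P: "(x, m, n) \<in> Pset G"
    using rep_in_Pset[OF C] rep by simp
  then have x: "x \<in> boundary_paths G" and mn: "m \<le> n" and nx: "\<not> leE n (fst x)"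
    by (simp_all add: Pset_iff)
  have "m \<le> vmin_e m (fst x)"
    using off rep unfolding ext_rg_offset_def vec_eq_iff less_eq_vec_def by simp
  then have mm: "vmin_e m (fst x) = m"
    using vmin_e_le by (metis order.antisym)
  then have mx: "leE m (fst x)"
    by (simp add: vmin_e_eq_iff[symmetric])
  have lx: "sc G l = vtx G x m"
    using lC rep Pset_seg[OF P] mm by (simp add: ext_base_def)
  have "deg G l + n - m = deg G l + (n - m)"
    using mn unfolding vec_eq_iff less_eq_vec_def by simp
  then have "cp (ext G) (Inl l) (Inr C) = Inr (Pcls G (concat G l (shift m x)) 0 (deg G l + (n - m)))"
    using rep by (simp add: ext_simps)
  moreover have "vmin_e 0 (fst (concat G l (shift m x))) = 0"
    by (simp add: vmin_e_eq_iff leE_0)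
  ultimately show ?thesis
    using ext_key_concat_shift[OF l x mx lx mn nx, of 0] seg_full[OF l] rep mm
    by (simp add: ext_base_def ext_simps)
qed

lemma ext_key_Pcls_cp:
  assumes P: "(x, m, n) \<in> Pset G" and P': "(y, p, q) \<in> Pset G"
    and xy: "vtx G x (vmin_e n (fst x)) = vtx G y (vmin_e p (fst y))"
    and off: "n - vmin_e n (fst x) = p - vmin_e p (fst y)"
  defines "z \<equiv> concat G (snd x 0 (vmin_e n (fst x))) (shift (vmin_e p (fst y)) y)"
  shows "Inr (Pcls G z m (n + q - p)) \<in> mor (ext G)
    \<and> ext_key G (Inr (Pcls G z m (n + q - p)))
      = (cp G (snd x (vmin_e m (fst x)) (vmin_e n (fst x))) (snd y (vmin_e p (fst y)) (vmin_e q (fst y))),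
         m - vmin_e m (fst x), (n - m) + (q - p))"
proof -
  have x: "graph_morph G x" and y: "y \<in> boundary_paths G" and mn: "m \<le> n" and pq: "p \<le> q"
    and qy: "\<not> leE q (fst y)"
    using P P' by (simp_all add: Pset_iff boundary_path_graph_morph)
  define mm nn pp where "mm = vmin_e m (fst x)" and "nn = vmin_e n (fst x)" and "pp = vmin_e p (fst y)"
  have le: "mm \<le> nn" "nn \<le> n" "pp \<le> p" "pp \<le> q" "leE nn (fst x)" "leE pp (fst y)"
    using vmin_e_mono[OF mn] vmin_e_le pq leE_vmin_e unfolding mm_def nn_def pp_def
    by (auto intro: order.trans)
  note n_N = add_diff_eq_of_diff_eq[OF off[folded nn_def pp_def] le(2-4)]
  let ?l = "snd x 0 nn"
  have l: "?l \<in> mor G" "deg G ?l = nn" "sc G ?l = vtx G y pp"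
    using graph_morph_seg[OF x zero_le le(5)] xy unfolding nn_def pp_def by simp_all
  have "vmin_e n (fst z) = nn"
    using vmin_e_concat_shift[OF le(6,3), where G = G and l = "snd x 0 nn"] unfolding z_def n_N(1)[symmetric] l(2)
    by (simp add: pp_def flip: nn_def)
  then have z_m: "vmin_e m (fst z) = mm"
    unfolding mm_def nn_def by (rule vmin_e_eq_below[OF mn])
  then have "vmin_e m (fst z) \<le> deg G ?l"
    using le(1) l(2) by simp
  moreover have "m \<le> nn + (q - pp)"
    using le_add_diff_vec[OF mn pq] unfolding n_N(2) .
  ultimately have "Inr (Pcls G z m (nn + (q - pp))) \<in> mor (ext G)
    \<and> ext_key G (Inr (Pcls G z m (nn + (q - pp))))
      = (cp G (seg G ?l mm nn) (snd y pp (vmin_e q (fst y))), m - mm, nn + (q - pp) - m)"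
    using ext_key_concat_shift[OF l(1) y le(6) l(3) le(4) qy] z_m l(2)
    unfolding z_def nn_def pp_def by simp
  moreover have "seg G ?l mm nn = snd x mm nn"
    by (rule seg_path[OF x le(1) order.refl le(5)])
  ultimately show ?thesis
    using add_diff_diff_vec[OF mn pq] unfolding n_N(2) mm_def nn_def pp_def by simp
qed

lemma ext_cp_Inr_Inr:
  assumes C: "C \<in> Pset G // Prel G" and C': "C' \<in> Pset G // Prel G"
    and CC': "sc G (ext_base (Inr C)) = rg G (ext_base (Inr C'))"
    and off: "ext_sc_offset (Inr C) = ext_rg_offset (Inr C')"
  shows "cp (ext G) (Inr C) (Inr C') \<in> mor (ext G)
    \<and> ext_key G (cp (ext G) (Inr C) (Inr C')) = (cp G (ext_base (Inr C)) (ext_base (Inr C')),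
        ext_rg_offset (Inr C), deg (ext G) (Inr C) + deg (ext G) (Inr C'))"
proof -
  obtain x m n where rep: "rep C = (x, m, n)"
    by (metis prod_cases3)
  obtain y p q where rep': "rep C' = (y, p, q)"
    by (metis prod_cases3)
  have P: "(x, m, n) \<in> Pset G" and P': "(y, p, q) \<in> Pset G"
    using rep_in_Pset[OF C] rep_in_Pset[OF C'] rep rep' by simp_all
  have "vtx G x (vmin_e n (fst x)) = vtx G y (vmin_e p (fst y))"
    and "n - vmin_e n (fst x) = p - vmin_e p (fst y)"
    using off CC' rep rep' Pset_seg[OF P] Pset_seg[OF P']
    by (simp_all add: ext_sc_offset_def ext_rg_offset_def ext_base_def)
  from ext_key_Pcls_cp[OF P P' this] show ?thesis
    using rep rep' by (simp add: ext_base_def ext_rg_offset_def ext_simps)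
qed

lemma ext_cp:
  assumes f: "f \<in> mor (ext G)" and g: "g \<in> mor (ext G)" and fg: "sc (ext G) f = rg (ext G) g"
  shows "cp (ext G) f g \<in> mor (ext G)
    \<and> ext_key G (cp (ext G) f g)
      = (cp G (ext_base f) (ext_base g), ext_rg_offset f, deg (ext G) f + deg (ext G) g)"
proof -
  have bases: "sc G (ext_base f) = rg G (ext_base g)"
    and offsets: "ext_sc_offset f = ext_rg_offset g"
    using ext_obj_key_sc[OF f] ext_obj_key_rg[OF g] fg by simp_all
  show ?thesis
  proof (cases f)
    case (Inl l)
    show ?thesis
    proof (cases g)
      case (Inl l')
      then show ?thesis
        using \<open>f = Inl l\<close> f g bases cp_props[of l l']
        by (simp add: ext_key_def ext_base_def ext_rg_offset_def ext_simps(6,9))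
    next
      case (Inr C')
      then show ?thesis
        using \<open>f = Inl l\<close> f g bases offsets ext_cp_Inl_Inr[of l C']
        by (simp add: ext_base_def ext_rg_offset_def ext_sc_offset_def ext_simps(9))
    qed
  next
    case (Inr C)
    obtain C' where "g = Inr C'"
      using fg Inr by (cases g; cases "rep C") (auto simp: ext_simps)
    then show ?thesis
      using Inr f g bases offsets ext_cp_Inr_Inr[of C C'] by simp
  qed
qed

lemma min_ext_ext:
  assumes l: "l \<in> mor (ext G)" and m: "m \<in> mor (ext G)" and ab: "(a, b) \<in> min_ext (ext G) l m"
  defines "D \<equiv> vmax (deg (ext G) l) (deg (ext G) m)"
  shows "(ext_base a, ext_base b) \<in> min_ext G (ext_base l) (ext_base m)
    \<and> ext_key G a = (ext_base a, ext_sc_offset l, D - deg (ext G) l)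
    \<and> ext_key G b = (ext_base b, ext_sc_offset m, D - deg (ext G) m)"
proof -
  have a: "a \<in> mor (ext G)" and b: "b \<in> mor (ext G)"
    and la: "sc (ext G) l = rg (ext G) a" and mb: "sc (ext G) m = rg (ext G) b"
    and lamb: "cp (ext G) l a = cp (ext G) m b" and dD: "deg (ext G) (cp (ext G) l a) = D"
    using ab unfolding min_ext_def D_def by auto
  have offsets: "ext_rg_offset a = ext_sc_offset l" "ext_rg_offset b = ext_sc_offset m"
    and bases: "sc G (ext_base l) = rg G (ext_base a)" "sc G (ext_base m) = rg G (ext_base b)"
    using ext_obj_key_sc[OF l] ext_obj_key_rg[OF a] la ext_obj_key_sc[OF m] ext_obj_key_rg[OF b] mb
    by simp_all
  have "ext_key G (cp (ext G) l a) = ext_key G (cp (ext G) m b)"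
    using lamb by simp
  then have base_eq: "cp G (ext_base l) (ext_base a) = cp G (ext_base m) (ext_base b)"
    and la_D: "deg (ext G) l + deg (ext G) a = D" and mb_D: "deg (ext G) m + deg (ext G) b = D"
    using ext_cp[OF l a la] ext_cp[OF m b mb] dD by (simp_all add: ext_key_def)
  have degs: "deg (ext G) a = D - deg (ext G) l" "deg (ext G) b = D - deg (ext G) m"
    by (simp flip: la_D, simp flip: mb_D)
  have "deg G (ext_base l) + deg G (ext_base a) = deg G (ext_base m) + deg G (ext_base b)"
    using base_eq cp_props[OF ext_base_mor[OF l] ext_base_mor[OF a] bases(1)]
      cp_props[OF ext_base_mor[OF m] ext_base_mor[OF b] bases(2)] by simp
  with la_D have "deg G (ext_base l) + deg G (ext_base a) = vmax (deg G (ext_base l)) (deg G (ext_base m))"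
    unfolding D_def by (rule deg_ext_base_add_eq_vmax[OF l a m b offsets])
  then have "(ext_base a, ext_base b) \<in> min_ext G (ext_base l) (ext_base m)"
    using base_eq bases ext_base_mor[OF a] ext_base_mor[OF b]
      cp_props[OF ext_base_mor[OF l] ext_base_mor[OF a] bases(1)]
    unfolding min_ext_def by simp
  then show ?thesis
    using offsets degs by (simp add: ext_key_def)
qed

lemma finitely_aligned_ext:
  assumes "finitely_aligned G"
  shows "finitely_aligned (ext G)"
  unfolding finitely_aligned_def
proof (intro ballI)
  fix l m
  assume l: "l \<in> mor (ext G)" and m: "m \<in> mor (ext G)"
  let ?D = "vmax (deg (ext G) l) (deg (ext G) m)"
  let ?key = "\<lambda>(a, b). (ext_key G a, ext_key G b)"
  have "?key ` min_ext (ext G) l m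
      \<subseteq> (\<lambda>(\<alpha>, \<beta>). ((\<alpha>, ext_sc_offset l, ?D - deg (ext G) l), (\<beta>, ext_sc_offset m, ?D - deg (ext G) m)))
        ` min_ext G (ext_base l) (ext_base m)"
    using min_ext_ext[OF l m] by force
  moreover have "finite (min_ext G (ext_base l) (ext_base m))"
    using assms ext_base_mor[OF l] ext_base_mor[OF m] unfolding finitely_aligned_def by blast
  moreover have "inj_on ?key (min_ext (ext G) l m)"
    using ext_key_inj unfolding inj_on_def min_ext_def by fast
  ultimately show "finite (min_ext (ext G) l m)"
    by (meson finite_imageD finite_imageI finite_subset)
qed

lemma row_finite_ext:
  assumes "row_finite G"
  shows "row_finite (ext G)"
  unfolding row_finite_def
proof (intro ballI allI)
  fix v N
  let ?S = "{f \<in> mor (ext G). rg (ext G) f = v \<and> deg (ext G) f = N}"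
  show "finite ?S"
  proof (cases "?S = {}")
    case False
    then obtain f0 where f0: "f0 \<in> ?S"
      by blast
    define u off where "u = rg G (ext_base f0)" and "off = ext_rg_offset f0"
    have "u \<in> obj G"
      using ext_base_mor rg_sc_in_obj f0 unfolding u_def by blast
    have "ext_key G ` ?S
        \<subseteq> (\<lambda>\<alpha>. (\<alpha>, off, N)) ` (\<Union>d\<in>{..N}. {\<alpha> \<in> mor G. rg G \<alpha> = u \<and> deg G \<alpha> = d})"
    proof
      fix k
      assume "k \<in> ext_key G ` ?S"
      then obtain f where f: "f \<in> ?S" and k: "k = ext_key G f"
        by blast
      then have "rg G (ext_base f) = u" "ext_rg_offset f = off"
        using ext_obj_key_rg f0 unfolding u_def off_def by (metis (mono_tags, lifting) mem_Collect_eq prod.inject)+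
      moreover have "ext_base f \<in> (\<Union>d\<in>{..N}. {\<alpha> \<in> mor G. rg G \<alpha> = u \<and> deg G \<alpha> = d})"
        using f ext_base_mor deg_ext_base_le \<open>rg G (ext_base f) = u\<close> by auto
      ultimately show "k \<in> (\<lambda>\<alpha>. (\<alpha>, off, N)) ` (\<Union>d\<in>{..N}. {\<alpha> \<in> mor G. rg G \<alpha> = u \<and> deg G \<alpha> = d})"
        using k f unfolding ext_key_def by (intro image_eqI) auto
    qed
    moreover have "finite (\<Union>d\<in>{..N}. {\<alpha> \<in> mor G. rg G \<alpha> = u \<and> deg G \<alpha> = d})"
      using assms \<open>u \<in> obj G\<close> finite_atMost_vec unfolding row_finite_def by blast
    moreover have "inj_on (ext_key G) ?S"
      using ext_key_inj by (rule inj_on_subset) blast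
    ultimately show ?thesis
      by (meson finite_imageD finite_imageI finite_subset)
  qed (metis finite.emptyI)
qed

end

theorem theorem3p26:
  fixes G :: "('v, 'a, 'k::finite) kg"
  assumes "kgraph G"
  shows "(finitely_aligned G \<longrightarrow> finitely_aligned (ext G))
       \<and> (row_finite G \<longrightarrow> row_finite (ext G))"
proof -
  interpret k_graph G
    by (rule k_graph.intro[OF assms])
  show ?thesis
    using finitely_aligned_ext row_finite_ext by blast
qed

end
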